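(* Let $f:\mathbb{R}/\mathbb{Z}\to\mathbb{Z}/2\mathbb{Z}$ be defined by $f(t)=1$ if $t\in[\tfrac18,\tfrac12)\cup[\tfrac58,\tfrac34)$ and $f(t)=0$ if $t\in[0,\tfrac18)\cup[\tfrac12,\tfrac58)\cup[\tfrac34,1)$. Let $t$ be uniformly distributed on $\mathbb{R}/\mathbb{Z}$. Then for every $k\ge1$, $$\mathbb{P}\big(f(2^kt)+f(2^{k-1}t)+\cdots+f(t)=0 \text{ in } \mathbb{Z}/2\mathbb{Z}\big)=\tfrac58.$$ In particular the sum does not become equidistributed on $\mathbb{Z}/2\mathbb{Z}$ as $k\to\infty$, even though $f$ is supported neither on a proper subgroup nor on a coset of a proper subgroup. *)

theory Defs
  imports "HOL-Analysis.Analysis"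
begin

text \<open>The function f on R/Z, represented as a 1-periodic function on the reals
  via the fractional part (representative in [0,1)), with values in Z/2Z
  represented by 0/1 :: nat (addition taken mod 2, i.e. parity).\<close>
definition fcirc :: "real \<Rightarrow> nat" where
  "fcirc t = (let s = frac t in
     if (1/8 \<le> s \<and> s < 1/2) \<or> (5/8 \<le> s \<and> s < 3/4) then 1 else 0)"

end

theory Submission
  imports Defs
begin

text \<open>For \<open>0 \<le> t < 1\<close> and \<open>j \<le> k\<close>, the eighth of the circle containing \<open>2^j t\<close> is
  read off from three consecutive binary digits of \<open>n = \<lfloor>2^(k+3) t\<rfloor>\<close>, so the probability is the
  proportion of \<open>n < 2^(k+3)\<close> whose sum of \<open>f\<close>-values over these \<open>k + 1\<close> digit windows is even.
  Grouping the \<open>n\<close> by their last three digits \<open>w\<close>, the signed counts \<open>S\<^sub>k(w)\<close> satisfy a linear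
  recurrence in \<open>k\<close> (strip the last digit) whose matrix has an eigenvector with eigenvalue 2 and
  entry sum 4, and \<open>S\<^sub>2\<close> is already twice that eigenvector. So the total signed count is
  \<open>2^(k+1)\<close>, and \<open>(2^(k+3) + 2^(k+1)) / 2 = 5 \<cdot> 2^k\<close> of the \<open>n\<close> give an even sum.\<close>

lemma floor_mult_frac:
  fixes y :: real
  assumes "m > 0"
  shows "\<lfloor>of_int m * frac y\<rfloor> = \<lfloor>of_int m * y\<rfloor> mod m"
proof -
  have "\<lfloor>of_int m * frac y\<rfloor> = \<lfloor>of_int m * y - of_int (m * \<lfloor>y\<rfloor>)\<rfloor>"
    by (simp add: frac_def algebra_simps)
  also have "\<dots> = \<lfloor>of_int m * y\<rfloor> - m * \<lfloor>y\<rfloor>"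
    by (rule floor_diff_of_int)
  also have "\<lfloor>y\<rfloor> = \<lfloor>of_int m * y\<rfloor> div m"
    using floor_divide_real_eq_div[of m "of_int m * y"] assms by simp
  finally show ?thesis
    by (simp add: minus_mult_div_eq_mod)
qed

lemma sum_lessThan_mult:
  "(\<Sum>n<M * a. h n) = (\<Sum>m<M. \<Sum>w<a. h (a * m + w))"
  for h :: "nat \<Rightarrow> 'b::comm_monoid_add"
proof -
  have "(\<Sum>w<a. h (a * m + w)) = (\<Sum>n\<in>{m * a..<m * a + a}. h n)" for m
    using sum.shift_bounds_nat_ivl[of h 0 "m * a" a]
    by (simp add: lessThan_atLeast0 mult.commute add.commute)
  then show ?thesis
    by (simp add: sum.nat_group)
qed

lemma card_even_sign_sum:
  fixes h :: "'a \<Rightarrow> nat"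
  assumes "finite A"
  shows "2 * int (card {n \<in> A. even (h n)}) = int (card A) + (\<Sum>n\<in>A. (-1) ^ h n)"
proof -
  let ?E = "{n \<in> A. even (h n)}"
  have "(\<Sum>n\<in>A. (-1::int) ^ h n) = (\<Sum>n\<in>A - ?E. (-1) ^ h n) + (\<Sum>n\<in>?E. (-1) ^ h n)"
    using assms by (intro sum.subset_diff) auto
  also have "\<dots> = (\<Sum>n\<in>A - ?E. -1) + (\<Sum>n\<in>?E. 1)"
    by (intro arg_cong2[where f = "(+)"] sum.cong) auto
  also have "\<dots> = int (card ?E) - int (card (A - ?E))"
    by simp
  also have "card (A - ?E) = card A - card ?E"
    using assms by (simp add: card_Diff_subset)
  finally show ?thesis
    using card_mono[OF assms, of ?E] by auto
qed

lemma floor_mult_eq_iff_mem: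
  fixes t :: real
  assumes "M > 0"
  shows "\<lfloor>real M * t\<rfloor> = int n \<longleftrightarrow> t \<in> {real n / M ..< (real n + 1) / M}"
  using assms by (simp add: floor_eq_iff field_simps)

lemma measure_floor_preimage:
  assumes "M > 0"
  shows "measure lborel {t \<in> {0..<1::real}. P (nat \<lfloor>real M * t\<rfloor>)} = card {n. n < M \<and> P n} / M"
proof -
  define E where "E = {n. n < M \<and> P n}"
  define I where "I n = {real n / M ..< (real n + 1) / M}" for n
  have cell: "t \<in> I n \<longleftrightarrow> \<lfloor>real M * t\<rfloor> = int n" for t n
    unfolding I_def using floor_mult_eq_iff_mem[OF assms] by simp
  have preimage: "{t \<in> {0..<1}. P (nat \<lfloor>real M * t\<rfloor>)} = (\<Union>n\<in>E. I n)"
  proof (intro equalityI subsetI)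
    fix t assume "t \<in> {t \<in> {0..<1}. P (nat \<lfloor>real M * t\<rfloor>)}"
    then have "0 \<le> real M * t" "real M * t < M" and "P (nat \<lfloor>real M * t\<rfloor>)"
      using assms by auto
    moreover have "nat \<lfloor>real M * t\<rfloor> < M"
      using calculation by (simp add: nat_less_iff floor_less_iff)
    ultimately show "t \<in> (\<Union>n\<in>E. I n)"
      unfolding E_def by (intro UN_I[of "nat \<lfloor>real M * t\<rfloor>"]) (auto simp: cell)
  next
    fix t assume "t \<in> (\<Union>n\<in>E. I n)"
    then obtain n where "n < M" "P n" "real n / M \<le> t" "t < (real n + 1) / M" "\<lfloor>real M * t\<rfloor> = int n"
      unfolding E_def using cell by (auto simp: I_def)
    moreover have "0 \<le> real n / M" and "(real n + 1) / M \<le> 1"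
      using \<open>n < M\<close> by (simp_all add: field_simps)
    ultimately have "0 \<le> t" "t < 1"
      by linarith+
    with \<open>P n\<close> \<open>\<lfloor>real M * t\<rfloor> = int n\<close> show "t \<in> {t \<in> {0..<1}. P (nat \<lfloor>real M * t\<rfloor>)}"
      by simp
  qed
  have "disjoint_family_on I E"
    unfolding disjoint_family_on_def by (auto simp: cell)
  then have "measure lborel (\<Union>n\<in>E. I n) = (\<Sum>n\<in>E. measure lborel (I n))"
    by (rule measure_finite_Union[rotated 2]) (auto simp: E_def I_def divide_right_mono)
  also have "\<dots> = (\<Sum>n\<in>E. 1 / M)"
    using assms by (intro sum.cong) (simp_all add: I_def divide_right_mono diff_divide_distrib[symmetric])
  finally show ?thesis
    unfolding preimage by (simp add: E_def)
qed

definition eighth_value :: "nat \<Rightarrow> nat" where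
  "eighth_value m = (if m \<in> {1, 2, 3, 5} then 1 else 0)"

definition window_sum :: "nat \<Rightarrow> nat \<Rightarrow> nat" where
  "window_sum k n = (\<Sum>i\<le>k. eighth_value (n div 2 ^ i mod 8))"

lemma window_sum_Suc:
  "window_sum (Suc k) n = eighth_value (n mod 8) + window_sum k (n div 2)"
  unfolding window_sum_def sum.atMost_Suc_shift by (simp add: div_mult2_eq)

lemma fcirc_eq_eighth_value: "fcirc y = eighth_value (nat (\<lfloor>8 * y\<rfloor> mod 8))"
proof -
  define q where "q = \<lfloor>8 * frac y\<rfloor>"
  have "\<lfloor>8 * y\<rfloor> mod 8 = q"
    using floor_mult_frac[of 8 y] by (simp add: q_def)
  moreover have "of_int q \<le> 8 * frac y" "8 * frac y < of_int q + 1"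
    by (simp_all add: q_def)
  moreover have "0 \<le> q" "q < 8"
    using frac_ge_0[of y] frac_lt_1[of y] by (simp_all add: q_def floor_less_iff)
  then have "q \<in> {0, 1, 2, 3, 4, 5, 6, 7}"
    by auto
  ultimately show ?thesis
    unfolding fcirc_def Let_def by (auto simp: eighth_value_def)
qed

lemma fcirc_two_power:
  fixes t :: real
  assumes "0 \<le> t" "j \<le> k"
  shows "fcirc (2 ^ j * t) = eighth_value (nat \<lfloor>2 ^ (k + 3) * t\<rfloor> div 2 ^ (k - j) mod 8)"
proof -
  obtain d where "k = j + d"
    using assms(2) le_iff_add by blast
  then have "(2::real) ^ (k + 3) = 8 * 2 ^ j * 2 ^ (k - j)"
    by (simp add: power_add)
  then have "\<lfloor>8 * (2 ^ j * t)\<rfloor> = \<lfloor>2 ^ (k + 3) * t\<rfloor> div 2 ^ (k - j)"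
    using floor_divide_real_eq_div[of "2 ^ (k - j)" "2 ^ (k + 3) * t"] by simp
  also have "\<dots> = int (nat \<lfloor>2 ^ (k + 3) * t\<rfloor> div 2 ^ (k - j))"
    using assms(1) by (simp add: zdiv_int)
  finally show ?thesis
    unfolding fcirc_eq_eighth_value by (simp add: nat_mod_distrib)
qed

lemma sum_fcirc_eq_window_sum:
  fixes t :: real
  assumes "0 \<le> t"
  shows "(\<Sum>j\<le>k. fcirc (2 ^ j * t)) = window_sum k (nat \<lfloor>2 ^ (k + 3) * t\<rfloor>)"
proof -
  define h where "h i = eighth_value (nat \<lfloor>2 ^ (k + 3) * t\<rfloor> div 2 ^ i mod 8)" for i
  have "(\<Sum>j\<le>k. fcirc (2 ^ j * t)) = (\<Sum>j<Suc k. h (Suc k - Suc j))"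
    unfolding lessThan_Suc_atMost
    by (rule sum.cong) (simp_all add: fcirc_two_power[OF assms] h_def)
  also have "\<dots> = (\<Sum>j<Suc k. h j)"
    by (rule sum.nat_diff_reindex)
  finally show ?thesis
    by (simp add: window_sum_def h_def lessThan_Suc_atMost)
qed

definition signed_window_sum :: "nat \<Rightarrow> nat \<Rightarrow> int" where
  "signed_window_sum k w = (\<Sum>m<2 ^ k. (-1) ^ window_sum k (8 * m + w))"

lemma signed_window_sum_0: "w < 8 \<Longrightarrow> signed_window_sum 0 w = (-1) ^ eighth_value w"
  by (simp add: signed_window_sum_def window_sum_def)

lemma signed_window_sum_Suc:
  assumes "w < 8"
  shows "signed_window_sum (Suc k) w =
    (-1) ^ eighth_value w * (signed_window_sum k (w div 2) + signed_window_sum k (w div 2 + 4))"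
proof -
  have "window_sum (Suc k) (8 * m + w) = eighth_value w + window_sum k (4 * m + w div 2)" for m
  proof -
    have "(8 * m + w) div 2 = 4 * m + w div 2"
      by presburger
    with assms show ?thesis
      by (simp add: window_sum_Suc)
  qed
  then have "signed_window_sum (Suc k) w =
      (-1) ^ eighth_value w * (\<Sum>m<2 ^ k * 2. (-1) ^ window_sum k (4 * m + w div 2))"
    by (simp add: signed_window_sum_def power_add sum_distrib_left mult.commute)
  also have "(\<Sum>m<2 ^ k * 2. (-1::int) ^ window_sum k (4 * m + w div 2)) =
      signed_window_sum k (w div 2) + signed_window_sum k (w div 2 + 4)"
    unfolding sum_lessThan_mult signed_window_sum_def sum.distrib[symmetric]
    by (rule sum.cong) (simp_all add: lessThan_nat_numeral algebra_simps)
  finally show ?thesis .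
qed

lemma nat_less_8_iff: "(w::nat) < 8 \<longleftrightarrow> w \<in> {0, 1, 2, 3, 4, 5, 6, 7}"
  by auto

lemma signed_window_sum_1:
  assumes "w < 8"
  shows "signed_window_sum 1 w = (if w = 1 then -2 else if w < 4 then 2 else 0)"
  using assms unfolding nat_less_8_iff
  by (auto simp: signed_window_sum_Suc[where k = 0, simplified] signed_window_sum_0 eighth_value_def)

definition stable_signs :: "nat \<Rightarrow> int" where
  "stable_signs w = (if w \<in> {1, 5} then -1 else 1)"

lemma stable_signs_transfer:
  "w < 8 \<Longrightarrow> (-1) ^ eighth_value w * (stable_signs (w div 2) + stable_signs (w div 2 + 4)) = 2 * stable_signs w"
  unfolding nat_less_8_iff by (auto simp: eighth_value_def stable_signs_def)

lemma signed_window_sum_stable: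
  assumes "1 \<le> k" "w < 8"
  shows "signed_window_sum (Suc k) w = 2 ^ k * stable_signs w"
  using assms
proof (induction k arbitrary: w rule: dec_induct)
  case base
  then have "w div 2 < 8" "w div 2 + 4 < 8"
    by auto
  then have "signed_window_sum (Suc 1) w =
      (-1) ^ eighth_value w * (signed_window_sum 1 (w div 2) + signed_window_sum 1 (w div 2 + 4))"
    using signed_window_sum_Suc[OF base] by simp
  with base show ?case
    unfolding nat_less_8_iff
    by (auto simp del: One_nat_def simp add: signed_window_sum_1 eighth_value_def stable_signs_def)
next
  case (step k)
  have "w div 2 < 8" "w div 2 + 4 < 8"
    using step.prems by auto
  then have "signed_window_sum (Suc (Suc k)) w =
      2 ^ k * ((-1) ^ eighth_value w * (stable_signs (w div 2) + stable_signs (w div 2 + 4)))"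
    by (simp add: signed_window_sum_Suc[OF step.prems] step.IH algebra_simps)
  then show ?case
    by (simp add: stable_signs_transfer[OF step.prems])
qed

lemma sum_signed_window_sum:
  assumes "1 \<le> k"
  shows "(\<Sum>w<8. signed_window_sum k w) = 2 ^ (k + 1)"
proof (cases "k = 1")
  case True
  then show ?thesis
    by (simp add: lessThan_nat_numeral signed_window_sum_1[unfolded One_nat_def])
next
  case False
  then obtain j where "k = Suc j" "1 \<le> j"
    using assms by (cases k) auto
  then show ?thesis
    by (simp add: signed_window_sum_stable lessThan_nat_numeral stable_signs_def)
qed

lemma sign_sum_window_sum:
  "(\<Sum>n<2 ^ (k + 3). (-1::int) ^ window_sum k n) = (\<Sum>w<8. signed_window_sum k w)"
proof -
  have "(\<Sum>n<2 ^ (k + 3). (-1::int) ^ window_sum k n) = (\<Sum>n<2 ^ k * 8. (-1) ^ window_sum k n)"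
    by (simp add: power_add)
  also have "\<dots> = (\<Sum>w<8. signed_window_sum k w)"
    unfolding sum_lessThan_mult signed_window_sum_def by (rule sum.swap)
  finally show ?thesis .
qed

lemma card_even_window_sum:
  assumes "1 \<le> k"
  shows "card {n. n < 2 ^ (k + 3) \<and> even (window_sum k n)} = 5 * 2 ^ k"
proof -
  have "2 * int (card {n \<in> {..<2 ^ (k + 3)}. even (window_sum k n)}) = 2 ^ (k + 3) + 2 ^ (k + 1)"
    using card_even_sign_sum[of "{..<2 ^ (k + 3)}" "window_sum k"]
    by (simp add: sign_sum_window_sum sum_signed_window_sum[OF assms])
  then have "int (card {n. n < 2 ^ (k + 3) \<and> even (window_sum k n)}) = int (5 * 2 ^ k)"
    by (simp add: power_add)
  then show ?thesis
    by (simp only: of_nat_eq_iff)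
qed

theorem mainTheorem14:
  fixes k :: nat
  assumes "k \<ge> 1"
  shows "measure lborel {t \<in> {0..<1::real}. even (\<Sum>j\<le>k. fcirc (2 ^ j * t))} = 5 / 8"
proof -
  let ?M = "2 ^ (k + 3) :: nat"
  have "{t \<in> {0..<1::real}. even (\<Sum>j\<le>k. fcirc (2 ^ j * t))} =
      {t \<in> {0..<1}. even (window_sum k (nat \<lfloor>real ?M * t\<rfloor>))}"
    by (auto simp: sum_fcirc_eq_window_sum)
  also have "measure lborel \<dots> = card {n. n < ?M \<and> even (window_sum k n)} / ?M"
    by (rule measure_floor_preimage) simp
  also have "\<dots> = 5 / 8"
    using card_even_window_sum[OF assms] by (simp add: power_add)
  finally show ?thesis .
qed

end
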